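(* Let $n\ge1$, $k\ge1$, and let $s_1,\dots,s_k$ be nonnegative integers. There are $k$ players who independently each open one cereal box per time step; each box contains one of $n$ coupon types chosen uniformly at random, independently of everything else. Player $i$ is currently missing $s_i$ of the $n$ coupon types, and $X_i(s_i)$ is the number of boxes player $i$ must open until they have all $n$ types. For any subset $\{i_1,\dots,i_r\}$ of players let $M(s_{i_1},\dots,s_{i_r}):=\mathbb{E}[\max\{X_{i_1}(s_{i_1}),\dots,X_{i_r}(s_{i_r})\}]$, and let $$m(s_1,\dots,s_k):=\mathbb{E}\left[\min\{X_1(s_1),\dots,X_k(s_k)\}\right]$$ be the expected number of boxes required for the fastest player to complete the collection. Then $$m(s_1,\dots,s_k)=\sum_{i=1}^k M(s_i)-\sum_{i<j}M(s_i,s_j)+\sum_{i<j<l}M(s_i,s_j,s_l)-\cdots+(-1)^{k-1}M(s_1,\dots,s_k)$$ $$=n\left(\sum_{i=1}^k H(s_i)-\sum_{i<j}H(s_i+s_j)+\sum_{i<j<l}H(s_i+s_j+s_l)-\cdots+(-1)^{k-1}H\Big(\sum_{i=1}^k s_i\Big)\right)+o(n).$$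
   Context: $H(m)=\sum_{j=1}^m\frac1j$ denotes the $m$-th harmonic number ($H(0)=0$). The term $o(n)$ denotes a quantity $f(n)$ with $f(n)/n\to0$ as $n\to\infty$ with $k$ and $s_1,\dots,s_k$ fixed. *)

theory Defs
  imports "HOL-Probability.Probability" "HOL-Library.Landau_Symbols"
begin

text \<open>Probability space: coupon (omega (i,j)) is the type found by player i in its
 (j+1)-th box; all coupons are independent and uniform on the n types.\<close>
definition coupon_space :: "nat \<Rightarrow> nat \<Rightarrow> (nat \<times> nat \<Rightarrow> nat) measure" where
  "coupon_space n k = PiM ({..<k} \<times> UNIV) (\<lambda>_. measure_pmf (pmf_of_set {..<n}))"

text \<open>Number of boxes needed to complete the collection {..<n}, starting from the
 collection C and opening the boxes f 0, f 1, ... (0 on the null event of never completing).\<close>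
definition collect_time :: "nat \<Rightarrow> nat set \<Rightarrow> (nat \<Rightarrow> nat) \<Rightarrow> real" where
  "collect_time n C f =
     (if \<exists>t. {..<n} \<subseteq> C \<union> f ` {..<t}
      then real (LEAST t. {..<n} \<subseteq> C \<union> f ` {..<t}) else 0)"

definition player_time :: "nat \<Rightarrow> (nat \<Rightarrow> nat set) \<Rightarrow> nat \<Rightarrow> (nat \<times> nat \<Rightarrow> nat) \<Rightarrow> real" where
  "player_time n C i \<omega> = collect_time n (C i) (\<lambda>j. \<omega> (i, j))"

definition M_exp :: "nat \<Rightarrow> nat \<Rightarrow> (nat \<Rightarrow> nat set) \<Rightarrow> nat set \<Rightarrow> real" where
  "M_exp n k C S = integral\<^sup>L (coupon_space n k) (\<lambda>\<omega>. Max ((\<lambda>i. player_time n C i \<omega>) ` S))"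

definition m_exp :: "nat \<Rightarrow> nat \<Rightarrow> (nat \<Rightarrow> nat set) \<Rightarrow> real" where
  "m_exp n k C = integral\<^sup>L (coupon_space n k) (\<lambda>\<omega>. Min ((\<lambda>i. player_time n C i \<omega>) ` {..<k}))"

end

(*
  For a set S of players let U be the set of pairs (i, c) with i \<in> S and c a coupon missing
  for player i. Some player of S is unfinished after t boxes iff some pair of U has not been
  seen, so inclusion-exclusion over U gives
    P(max_{i\<in>S} X_i > t) = \<Sum>_{\<emptyset> \<noteq> B \<subseteq> U} (-1)^(|B|+1) R_B^t,
  where R_B = \<Prod>_{i\<in>S} (1 - |B_i|/n) is the chance that one box per player avoids B.
  Summing over t, M(S) = \<Sum>_B (-1)^(|B|+1) / (1 - R_B). Since n/|B| \<le> 1/(1 - R_B) \<le> n/|B| + 1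
  and \<Sum>_B (-1)^(|B|+1) / |B| = H(|U|), M(S) = n H(\<Sum>_{i\<in>S} s_i) + O(1).
  The formula for m is the maximum-minimums identity
    min_K f = \<Sum>_{\<emptyset> \<noteq> S \<subseteq> K} (-1)^(|S|+1) max_S f,
  applied pointwise and integrated.
*)

theory Submission
  imports Defs "HOL-Real_Asymp.Real_Asymp"
begin

lemma sum_Pow_neg_one_power_card:
  assumes "finite S" "S \<noteq> {}"
  shows "(\<Sum>T\<in>Pow S. (-1) ^ card T) = (0::real)"
proof -
  have "(\<Prod>x\<in>S. 1 - 1) = (\<Sum>T\<in>Pow S. (-1) ^ card T * (\<Prod>x\<in>T. 1) * (\<Prod>x\<in>S - T. 1::real))"
    by (rule prod_diff_conv_sum[OF assms(1)])
  moreover have "card S \<noteq> 0"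
    using assms by simp
  ultimately show ?thesis
    by (simp add: power_0_left)
qed

lemma alternating_sum_Max_insert_maximal:
  fixes f :: "'a \<Rightarrow> real"
  assumes "finite K" "K \<noteq> {}" "x \<notin> K" "\<And>y. y \<in> K \<Longrightarrow> f y \<le> f x"
  shows "(\<Sum>S | S \<subseteq> insert x K \<and> S \<noteq> {}. (-1) ^ (card S + 1) * Max (f ` S))
       = (\<Sum>S | S \<subseteq> K \<and> S \<noteq> {}. (-1) ^ (card S + 1) * Max (f ` S))"
proof -
  have Max_insert: "Max (insert (f x) (f ` T)) = f x" if "T \<subseteq> K" for T
    using assms(4) that rev_finite_subset[OF assms(1) that] by (intro Max_eqI) auto
  have subsets_insert: "{S. S \<subseteq> insert x K \<and> S \<noteq> {}} = {S. S \<subseteq> K \<and> S \<noteq> {}} \<union> insert x ` Pow K"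
    by (auto simp: subset_insert_lemma Setcompr_eq_image)
  have "inj_on (insert x) (Pow K)"
    using assms(3) by (auto simp: inj_on_def insert_ident)
  then have "(\<Sum>S | S \<subseteq> insert x K \<and> S \<noteq> {}. (-1) ^ (card S + 1) * Max (f ` S))
      = (\<Sum>S | S \<subseteq> K \<and> S \<noteq> {}. (-1) ^ (card S + 1) * Max (f ` S))
        + (\<Sum>T\<in>Pow K. (-1) ^ (card (insert x T) + 1) * Max (f ` insert x T))"
    unfolding subsets_insert using assms(1,3)
    by (subst sum.union_disjoint) (auto simp: sum.reindex)
  also have "(\<Sum>T\<in>Pow K. (-1) ^ (card (insert x T) + 1) * Max (f ` insert x T))
      = f x * (\<Sum>T\<in>Pow K. (-1) ^ card T)"
    unfolding sum_distrib_left using assms(1,3)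
    by (intro sum.cong refl) (auto simp: Max_insert card_insert_if finite_subset)
  also have "\<dots> = 0"
    using assms(1,2) by (simp add: sum_Pow_neg_one_power_card)
  finally show ?thesis
    by simp
qed

lemma Min_eq_alternating_sum_Max:
  fixes f :: "'a \<Rightarrow> real"
  assumes "finite K" "K \<noteq> {}"
  shows "Min (f ` K) = (\<Sum>S | S \<subseteq> K \<and> S \<noteq> {}. (-1) ^ (card S + 1) * Max (f ` S))"
  using assms
proof (induction K rule: finite_ranking_induct[where f = f])
  case (insert x K)
  consider "K = {}" | "x \<in> K" | "x \<notin> K" "K \<noteq> {}"
    by blast
  then show ?case
  proof cases
    case 1
    then have "{S. S \<subseteq> insert x K \<and> S \<noteq> {}} = {{x}}"
      by auto
    then show ?thesis
      using 1 by simp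
  next
    case 2
    then show ?thesis
      using insert.IH by (auto simp: insert_absorb)
  next
    case 3
    then obtain y where "y \<in> K"
      by blast
    then have "Min (f ` K) \<le> f x"
      using insert.hyps by (meson Min_le finite_imageI imageI order_trans)
    then have "Min (f ` insert x K) = Min (f ` K)"
      using insert.hyps(1) 3 by (simp add: min_absorb2)
    moreover have "(\<Sum>S | S \<subseteq> insert x K \<and> S \<noteq> {}. (-1) ^ (card S + 1) * Max (f ` S))
        = (\<Sum>S | S \<subseteq> K \<and> S \<noteq> {}. (-1) ^ (card S + 1) * Max (f ` S))"
      using insert.hyps 3 by (intro alternating_sum_Max_insert_maximal)
    ultimately show ?thesis
      using insert.IH 3 by simp
  qed
qed simp

lemma sum_Pow_card:
  fixes g :: "nat \<Rightarrow> real"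
  assumes "finite U"
  shows "(\<Sum>B\<in>Pow U. g (card B)) = (\<Sum>j\<le>card U. of_nat (card U choose j) * g j)"
proof -
  have "(\<Sum>B\<in>Pow U. g (card B)) = (\<Sum>j\<le>card U. \<Sum>B\<in>{B\<in>Pow U. card B = j}. g (card B))"
    using assms by (intro sum.group[symmetric]) (auto intro: card_mono)
  also have "\<dots> = (\<Sum>j\<le>card U. of_nat (card U choose j) * g j)"
  proof (intro sum.cong refl)
    fix j
    have "{B\<in>Pow U. card B = j} = {B. B \<subseteq> U \<and> card B = j}"
      by auto
    then have "card {B\<in>Pow U. card B = j} = card U choose j"
      using n_subsets[OF assms] by simp
    then show "(\<Sum>B\<in>{B\<in>Pow U. card B = j}. g (card B)) = of_nat (card U choose j) * g j"
      by simp
  qed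
  finally show ?thesis .
qed

lemma harm_eq_alternating_binomial_sum:
  "harm m = (\<Sum>j<m. (-1) ^ j * of_nat (m choose Suc j) / of_nat (Suc j) :: real)"
proof (induction m)
  case (Suc m)
  have "(\<Sum>i\<le>Suc m. (-1) ^ i * of_nat (Suc m choose i)) = (0 :: real)"
    by (rule choose_alternating_sum) simp
  then have alternating: "(\<Sum>j<Suc m. (-1) ^ j * of_nat (Suc m choose Suc j)) = (1::real)"
    unfolding sum.atMost_Suc_shift by (simp add: lessThan_Suc_atMost sum_negf)
  have "(\<Sum>j<Suc m. (-1) ^ j * of_nat (m choose j) / of_nat (Suc j))
      = (\<Sum>j<Suc m. (-1) ^ j * of_nat (Suc m choose Suc j)) / (of_nat (Suc m) :: real)"
    unfolding sum_divide_distrib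
  proof (intro sum.cong refl)
    fix j
    have "of_nat (Suc m) * of_nat (m choose j) = (of_nat (Suc m choose Suc j) * of_nat (Suc j) :: real)"
      using Suc_times_binomial_eq[of m j] by (metis of_nat_mult)
    then have "of_nat (m choose j) / of_nat (Suc j) = (of_nat (Suc m choose Suc j) / of_nat (Suc m) :: real)"
      by (subst frac_eq_eq) (simp_all add: mult.commute)
    then show "(-1) ^ j * of_nat (m choose j) / of_nat (Suc j)
        = (-1) ^ j * of_nat (Suc m choose Suc j) / (of_nat (Suc m) :: real)"
      by (metis times_divide_eq_right)
  qed
  then have shifted: "(\<Sum>j<Suc m. (-1) ^ j * of_nat (m choose j) / of_nat (Suc j)) = 1 / (of_nat (Suc m) :: real)"
    by (simp only: alternating)
  have "(\<Sum>j<Suc m. (-1) ^ j * of_nat (Suc m choose Suc j) / of_nat (Suc j))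
      = (\<Sum>j<Suc m. (-1) ^ j * of_nat (m choose Suc j) / of_nat (Suc j)
                   + (-1) ^ j * of_nat (m choose j) / of_nat (Suc j) :: real)"
    by (intro sum.cong refl) (simp add: add_divide_distrib distrib_left)
  also have "\<dots> = harm m + 1 / of_nat (Suc m)"
    using Suc.IH by (simp only: sum.distrib shifted) simp
  also have "\<dots> = harm (Suc m)"
    by (simp add: harm_Suc inverse_eq_divide)
  finally show ?case ..
qed (simp add: harm_expand)

lemma harm_eq_alternating_sum_subsets:
  assumes "finite U"
  shows "harm (card U) = (\<Sum>B | B \<subseteq> U \<and> B \<noteq> {}. (-1) ^ (card B + 1) / of_nat (card B) :: real)"
proof -
  \<comment> \<open>the empty set contributes \<open>-1 / 0 = 0\<close>\<close>
  have "(\<Sum>B | B \<subseteq> U \<and> B \<noteq> {}. (-1) ^ (card B + 1) / of_nat (card B) :: real)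
      = (\<Sum>B\<in>Pow U. (-1) ^ (card B + 1) / of_nat (card B))"
    using assms by (intro sum.mono_neutral_left) auto
  also have "\<dots> = (\<Sum>j\<le>card U. of_nat (card U choose j) * ((-1) ^ (j + 1) / of_nat j))"
    by (rule sum_Pow_card[OF assms])
  also have "\<dots> = (\<Sum>j<card U. (-1) ^ j * of_nat (card U choose Suc j) / of_nat (Suc j))"
    unfolding sum.atMost_shift by (simp add: lessThan_Suc_atMost mult.commute)
  finally show ?thesis
    by (simp add: harm_eq_alternating_binomial_sum)
qed

lemma one_minus_sum_le_prod_one_minus:
  fixes x :: "'a \<Rightarrow> real"
  assumes "finite I" "\<And>i. i \<in> I \<Longrightarrow> 0 \<le> x i \<and> x i \<le> 1"
  shows "1 - sum x I \<le> (\<Prod>i\<in>I. 1 - x i)"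
  using assms
proof (induction I rule: finite_induct)
  case (insert a I)
  have "0 \<le> x a" "x a \<le> 1" "0 \<le> sum x I" "1 - sum x I \<le> (\<Prod>i\<in>I. 1 - x i)"
    using insert by (auto intro: sum_nonneg)
  then have "(1 - x a) * (1 - sum x I) \<le> (1 - x a) * (\<Prod>i\<in>I. 1 - x i)"
    by (intro mult_left_mono) auto
  moreover have "1 - (x a + sum x I) \<le> (1 - x a) * (1 - sum x I)"
    using \<open>0 \<le> x a\<close> \<open>0 \<le> sum x I\<close> by (simp add: algebra_simps)
  ultimately show ?case
    using insert.hyps by simp
qed simp

lemma prod_one_minus_le_exp_neg_sum:
  fixes x :: "'a \<Rightarrow> real"
  assumes "finite I" "\<And>i. i \<in> I \<Longrightarrow> 0 \<le> x i \<and> x i \<le> 1"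
  shows "(\<Prod>i\<in>I. 1 - x i) \<le> exp (- sum x I)"
proof -
  have "(\<Prod>i\<in>I. 1 - x i) \<le> (\<Prod>i\<in>I. exp (- x i))"
  proof (rule prod_mono)
    fix i assume "i \<in> I"
    then show "0 \<le> 1 - x i \<and> 1 - x i \<le> exp (- x i)"
      using assms(2) exp_ge_add_one_self[of "- x i"] by simp
  qed
  also have "\<dots> = exp (- sum x I)"
    using assms(1) by (simp add: exp_sum sum_negf[symmetric])
  finally show ?thesis .
qed

lemma inverse_one_minus_prod_one_minus_bounds:
  fixes x :: "'a \<Rightarrow> real"
  assumes "finite I" "\<And>i. i \<in> I \<Longrightarrow> 0 \<le> x i \<and> x i \<le> 1" "0 < sum x I"
  defines "R \<equiv> \<Prod>i\<in>I. 1 - x i"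
  shows "R < 1" "1 / sum x I \<le> 1 / (1 - R)" "1 / (1 - R) \<le> 1 / sum x I + 1"
proof -
  define X where "X = sum x I"
  have "0 < X"
    using assms(3) by (simp add: X_def)
  have "R \<le> exp (- X)"
    unfolding R_def X_def by (rule prod_one_minus_le_exp_neg_sum[OF assms(1,2)])
  also have "\<dots> \<le> 1 / (1 + X)"
    unfolding exp_minus inverse_eq_divide
    using exp_ge_add_one_self[of X] \<open>0 < X\<close> by (intro frac_le) auto
  finally have "1 - 1 / (1 + X) \<le> 1 - R"
    by simp
  moreover have "1 - 1 / (1 + X) = X / (1 + X)"
    using \<open>0 < X\<close> by (simp add: field_simps)
  ultimately have upper: "X / (1 + X) \<le> 1 - R"
    by simp
  moreover have "0 < X / (1 + X)"
    using \<open>0 < X\<close> by simp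
  ultimately have pos: "0 < 1 - R"
    by linarith
  then show "R < 1"
    by simp
  have "1 - X \<le> R"
    unfolding R_def X_def by (rule one_minus_sum_le_prod_one_minus[OF assms(1,2)])
  then show "1 / sum x I \<le> 1 / (1 - R)"
    unfolding X_def[symmetric] using pos by (intro frac_le) auto
  have "1 / (1 - R) \<le> 1 / (X / (1 + X))"
    using upper \<open>0 < X / (1 + X)\<close> by (intro frac_le) auto
  also have "\<dots> = 1 / X + 1"
    using \<open>0 < X\<close> by (simp add: field_simps)
  finally show "1 / (1 - R) \<le> 1 / sum x I + 1"
    by (simp add: X_def)
qed

context prob_space
begin

lemma prob_UN_inclusion_exclusion:
  assumes "finite A" "\<And>a. a \<in> A \<Longrightarrow> X a \<in> events"
  shows "prob (\<Union>a\<in>A. X a) = (\<Sum>B | B \<subseteq> A \<and> B \<noteq> {}. (-1) ^ (card B + 1) * prob (\<Inter>a\<in>B. X a))"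
proof -
  interpret Incl_Excl "\<lambda>S. S \<in> events" prob
    by unfold_locales (auto simp: disjnt_def finite_measure_Union)
  show ?thesis
    using restricted_indexed assms by blast
qed

lemma integral_nat_eq_sum_tail_probs:
  fixes Y :: "'a \<Rightarrow> nat"
  assumes "Y \<in> measurable M (count_space UNIV)" "(\<lambda>t. prob {\<omega>\<in>space M. t < Y \<omega>}) sums s"
  shows "integrable M (\<lambda>\<omega>. real (Y \<omega>))" "expectation (\<lambda>\<omega>. real (Y \<omega>)) = s"
proof -
  have "0 \<le> s"
    using sums_le[OF _ sums_zero assms(2)] by simp
  have "(\<integral>\<^sup>+\<omega>. ennreal (real (Y \<omega>)) \<partial>M) = (\<Sum>t. emeasure M {\<omega>\<in>space M. t < Y \<omega>})"
    using nn_integral_nat_function[OF assms(1)] by (simp add: ennreal_of_nat_eq_real_of_nat)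
  also have "\<dots> = ennreal s"
    using assms(2) by (simp add: emeasure_eq_measure suminf_ennreal2 sums_iff)
  finally have nn_integral: "(\<integral>\<^sup>+\<omega>. ennreal (real (Y \<omega>)) \<partial>M) = ennreal s" .
  have "(\<lambda>\<omega>. real (Y \<omega>)) \<in> borel_measurable M"
    using assms(1) by simp
  then show "integrable M (\<lambda>\<omega>. real (Y \<omega>))" "expectation (\<lambda>\<omega>. real (Y \<omega>)) = s"
    using nn_integral \<open>0 \<le> s\<close> by (auto intro: integrableI_nonneg simp: integral_eq_nn_integral)
qed

lemma AE_ex_if_prob_not_tendsto_0:
  assumes "\<And>t. {\<omega>\<in>space M. P t \<omega>} \<in> events" "(\<lambda>t. prob {\<omega>\<in>space M. \<not> P t \<omega>}) \<longlonglongrightarrow> 0"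
  shows "AE \<omega> in M. \<exists>t. P t \<omega>"
proof -
  let ?N = "{\<omega>\<in>space M. \<not> (\<exists>t. P t \<omega>)}"
  have N: "?N \<in> events"
    using assms(1) by (intro sets.sets_Collect_neg sets.sets_Collect_countable_Ex) auto
  have "prob ?N \<le> prob {\<omega>\<in>space M. \<not> P t \<omega>}" for t
    using assms(1) by (intro finite_measure_mono) auto
  then have "prob ?N \<le> 0"
    using assms(2) by (intro LIMSEQ_le_const) auto
  then show ?thesis
    using N by (intro AE_I[OF order.refl]) (auto simp: emeasure_eq_measure measure_le_0_iff)
qed

end

definition collected :: "nat \<Rightarrow> nat set \<Rightarrow> (nat \<Rightarrow> nat) \<Rightarrow> nat \<Rightarrow> bool" where
  "collected n A f t \<longleftrightarrow> {..<n} \<subseteq> A \<union> f ` {..<t}"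

definition completion_time :: "nat \<Rightarrow> nat set \<Rightarrow> (nat \<Rightarrow> nat) \<Rightarrow> nat" where
  "completion_time n A f = (if \<exists>t. collected n A f t then LEAST t. collected n A f t else 0)"

lemma collected_iff: "collected n A f t \<longleftrightarrow> (\<forall>c\<in>{..<n} - A. \<exists>j<t. f j = c)"
  unfolding collected_def by (auto simp: subset_iff image_iff eq_commute)

lemma collect_time_eq_completion_time: "collect_time n A f = real (completion_time n A f)"
  by (simp add: collect_time_def completion_time_def collected_def[abs_def])

lemma less_completion_time_iff:
  assumes "\<exists>t'. collected n A f t'"
  shows "t < completion_time n A f \<longleftrightarrow> \<not> collected n A f t"
proof -
  have mono: "collected n A f t'" if "collected n A f t" "t \<le> t'" for t t'
    using that unfolding collected_def by auto
  have least: "collected n A f (LEAST t. collected n A f t)"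
    using assms by (rule LeastI_ex)
  show ?thesis
  proof
    assume "t < completion_time n A f"
    then have "t < (LEAST t. collected n A f t)"
      using assms by (simp add: completion_time_def)
    then show "\<not> collected n A f t"
      by (rule not_less_Least)
  next
    assume "\<not> collected n A f t"
    then have "\<not> (LEAST t. collected n A f t) \<le> t"
      using mono[OF least] by blast
    then show "t < completion_time n A f"
      using assms unfolding completion_time_def by simp
  qed
qed

lemma measure_pmf_of_set_lessThan_Compl:
  assumes "0 < n" "A \<subseteq> {..<n}"
  shows "measure (pmf_of_set {..<n}) (- A) = 1 - real (card A) / real n"
proof -
  have "{..<n} \<inter> - A = {..<n} - A"
    by auto
  then have "measure (pmf_of_set {..<n}) (- A) = real (card ({..<n} - A)) / real n"
    using assms(1) by (subst measure_pmf_of_set) auto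
  moreover have "card ({..<n} - A) = n - card A" "card A \<le> n"
    using assms(2) finite_subset[OF assms(2)] card_mono[OF _ assms(2)] by (simp_all add: card_Diff_subset)
  ultimately show ?thesis
    using assms(1) by (simp add: diff_divide_distrib)
qed

locale coupon_collectors =
  fixes n k :: nat and C :: "nat \<Rightarrow> nat set"
  assumes n_pos: "0 < n"
begin

sublocale prob_space "coupon_space n k"
  unfolding coupon_space_def by (intro prob_space_PiM) (simp add: measure_pmf.prob_space_axioms)

abbreviation has_collected :: "nat \<Rightarrow> nat \<Rightarrow> (nat \<times> nat \<Rightarrow> nat) \<Rightarrow> bool" where
  "has_collected i t \<omega> \<equiv> collected n (C i) (\<lambda>j. \<omega> (i, j)) t"

abbreviation finish_time :: "nat \<Rightarrow> (nat \<times> nat \<Rightarrow> nat) \<Rightarrow> nat" where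
  "finish_time i \<omega> \<equiv> completion_time n (C i) (\<lambda>j. \<omega> (i, j))"

definition missing :: "nat \<Rightarrow> nat set" where
  "missing i = {..<n} - C i"

definition avoid_prob :: "nat set \<Rightarrow> (nat \<times> nat) set \<Rightarrow> real" where
  "avoid_prob S B = (\<Prod>i\<in>S. 1 - real (card (B `` {i})) / real n)"

lemma measurable_coupon:
  assumes "i < k"
  shows "(\<lambda>\<omega>. \<omega> (i, j)) \<in> measurable (coupon_space n k) (count_space UNIV)"
proof -
  have "(\<lambda>\<omega>. \<omega> (i, j)) \<in> measurable (coupon_space n k) (measure_pmf (pmf_of_set {..<n}))"
    unfolding coupon_space_def using assms by (intro measurable_component_singleton) auto
  then show ?thesis
    by simp
qed

lemma pred_has_collected:
  assumes "i < k"
  shows "Measurable.pred (coupon_space n k) (has_collected i t)"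
  unfolding collected_iff
  by (intro pred_intros_finite(3) pred_intros_countable(2) pred_intros_conj1'
      pred_count_space_const1 measurable_coupon assms) auto

lemma measurable_finish_time:
  assumes "i < k"
  shows "finish_time i \<in> measurable (coupon_space n k) (count_space UNIV)"
  unfolding completion_time_def
proof (intro measurable_If measurable_Least measurable_const)
  show "Measurable.pred (coupon_space n k) (has_collected i t)" for t
    by (rule pred_has_collected[OF assms])
  then show "{\<omega>\<in>space (coupon_space n k). \<exists>t. has_collected i t \<omega>} \<in> events"
    by (intro sets.sets_Collect_countable_Ex) (simp add: pred_def)
qed simp

lemma prob_coupons_in:
  assumes "J \<subseteq> {..<k} \<times> UNIV" "finite J"
  shows "prob {\<omega>\<in>space (coupon_space n k). \<forall>ij\<in>J. \<omega> ij \<in> X ij}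
       = (\<Prod>ij\<in>J. measure (pmf_of_set {..<n}) (X ij))"
proof -
  interpret Pi: product_prob_space "\<lambda>_. measure_pmf (pmf_of_set {..<n})" "{..<k} \<times> UNIV"
    by unfold_locales
  have "emeasure (coupon_space n k) {\<omega>\<in>space (coupon_space n k). \<forall>ij\<in>J. \<omega> ij \<in> X ij}
      = (\<Prod>ij\<in>J. emeasure (measure_pmf (pmf_of_set {..<n})) (X ij))"
    unfolding coupon_space_def using assms by (intro Pi.emeasure_PiM_Collect) auto
  then have "ennreal (prob {\<omega>\<in>space (coupon_space n k). \<forall>ij\<in>J. \<omega> ij \<in> X ij})
      = ennreal (\<Prod>ij\<in>J. measure (pmf_of_set {..<n}) (X ij))"
    by (simp add: emeasure_eq_measure measure_pmf.emeasure_eq_measure prod_ennreal)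
  then show ?thesis
    by (simp add: prod_nonneg)
qed

lemma prob_avoid:
  assumes "S \<subseteq> {..<k}" "\<And>i. i \<in> S \<Longrightarrow> A i \<subseteq> {..<n}"
  shows "prob {\<omega>\<in>space (coupon_space n k). \<forall>i\<in>S. \<forall>j<t. \<omega> (i, j) \<notin> A i}
       = (\<Prod>i\<in>S. 1 - real (card (A i)) / real n) ^ t"
proof -
  have "finite S"
    using assms(1) finite_subset by blast
  have "{\<omega>\<in>space (coupon_space n k). \<forall>i\<in>S. \<forall>j<t. \<omega> (i, j) \<notin> A i}
      = {\<omega>\<in>space (coupon_space n k). \<forall>ij\<in>S \<times> {..<t}. \<omega> ij \<in> - A (fst ij)}"
    by auto
  also have "prob \<dots> = (\<Prod>ij\<in>S \<times> {..<t}. measure (pmf_of_set {..<n}) (- A (fst ij)))"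
    using assms(1) \<open>finite S\<close> by (intro prob_coupons_in) auto
  also have "\<dots> = (\<Prod>ij\<in>S \<times> {..<t}. 1 - real (card (A (fst ij))) / real n)"
  proof (intro prod.cong refl measure_pmf_of_set_lessThan_Compl n_pos)
    show "A (fst ij) \<subseteq> {..<n}" if "ij \<in> S \<times> {..<t}" for ij
      using that by (intro assms(2)) auto
  qed
  also have "\<dots> = (\<Prod>i\<in>S. \<Prod>j<t. 1 - real (card (A i)) / real n)"
    by (subst prod.cartesian_product) (simp add: case_prod_beta)
  also have "\<dots> = (\<Prod>i\<in>S. 1 - real (card (A i)) / real n) ^ t"
    by (simp add: prod_power_distrib)
  finally show ?thesis .
qed

lemma prob_not_all_collected:
  assumes "S \<subseteq> {..<k}"
  shows "prob {\<omega>\<in>space (coupon_space n k). \<not> (\<forall>i\<in>S. has_collected i t \<omega>)}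
       = (\<Sum>B | B \<subseteq> Sigma S missing \<and> B \<noteq> {}. (-1) ^ (card B + 1) * avoid_prob S B ^ t)"
proof -
  define X where "X u = {\<omega>\<in>space (coupon_space n k). \<forall>j<t. \<omega> (fst u, j) \<noteq> snd u}" for u
  have "finite (Sigma S missing)"
    using assms finite_subset by (intro finite_SigmaI) (auto simp: missing_def)
  moreover have "X u \<in> events" if "u \<in> Sigma S missing" for u
  proof -
    have "fst u < k"
      using that assms by auto
    then have [measurable]: "(\<lambda>\<omega>. \<omega> (fst u, j)) \<in> measurable (coupon_space n k) (count_space UNIV)" for j
      by (rule measurable_coupon)
    show ?thesis
      unfolding X_def by measurable
  qed
  ultimately have "prob (\<Union>u\<in>Sigma S missing. X u)
      = (\<Sum>B | B \<subseteq> Sigma S missing \<and> B \<noteq> {}. (-1) ^ (card B + 1) * prob (\<Inter>u\<in>B. X u))"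
    by (rule prob_UN_inclusion_exclusion)
  also have "\<dots> = (\<Sum>B | B \<subseteq> Sigma S missing \<and> B \<noteq> {}. (-1) ^ (card B + 1) * avoid_prob S B ^ t)"
  proof (intro sum.cong refl arg_cong2[where f = times])
    fix B assume B: "B \<in> {B. B \<subseteq> Sigma S missing \<and> B \<noteq> {}}"
    then have "(\<Inter>u\<in>B. X u) = {\<omega>\<in>space (coupon_space n k). \<forall>i\<in>S. \<forall>j<t. \<omega> (i, j) \<notin> B `` {i}}"
      by (auto simp: X_def) (metis fst_conv snd_conv, blast)
    also have "prob \<dots> = avoid_prob S B ^ t"
      unfolding avoid_prob_def using assms B by (intro prob_avoid) (auto simp: missing_def)
    finally show "prob (\<Inter>u\<in>B. X u) = avoid_prob S B ^ t" .
  qed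
  moreover have "{\<omega>\<in>space (coupon_space n k). \<not> (\<forall>i\<in>S. has_collected i t \<omega>)} = (\<Union>u\<in>Sigma S missing. X u)"
    by (auto simp: X_def collected_iff missing_def) (meson DiffI lessThan_iff)+
  ultimately show ?thesis
    by simp
qed

lemma avoid_prob_bounds:
  assumes "finite S" "B \<subseteq> Sigma S missing" "B \<noteq> {}"
  shows "0 \<le> avoid_prob S B" "avoid_prob S B < 1"
    "real n / real (card B) \<le> 1 / (1 - avoid_prob S B)"
    "1 / (1 - avoid_prob S B) \<le> real n / real (card B) + 1"
proof -
  define x where "x i = real (card (B `` {i})) / real n" for i
  have Image_subset: "B `` {i} \<subseteq> {..<n}" for i
    using assms(2) by (auto simp: missing_def)
  then have x_bounds: "0 \<le> x i \<and> x i \<le> 1" for i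
    using n_pos card_mono[OF _ Image_subset[of i]] by (simp add: x_def)
  have "B = Sigma S (\<lambda>i. B `` {i})"
    using assms(2) by auto
  then have "card B = (\<Sum>i\<in>S. card (B `` {i}))"
    using assms(1) Image_subset finite_subset by (metis card_SigmaI finite_lessThan)
  then have sum_x: "sum x S = real (card B) / real n"
    by (simp add: x_def sum_divide_distrib)
  have "finite (Sigma S missing)"
    using assms(1) by (simp add: missing_def)
  then have "finite B"
    using assms(2) by (rule finite_subset[rotated])
  then have "0 < sum x S"
    using assms(3) n_pos by (simp add: sum_x card_gt_0_iff)
  note bounds = inverse_one_minus_prod_one_minus_bounds[OF assms(1) x_bounds this]
  have avoid_prob: "avoid_prob S B = (\<Prod>i\<in>S. 1 - x i)"
    by (simp add: avoid_prob_def x_def)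
  show "0 \<le> avoid_prob S B"
    unfolding avoid_prob using x_bounds by (simp add: prod_nonneg)
  show "avoid_prob S B < 1"
    unfolding avoid_prob by (rule bounds(1))
  show "real n / real (card B) \<le> 1 / (1 - avoid_prob S B)"
    "1 / (1 - avoid_prob S B) \<le> real n / real (card B) + 1"
    using bounds(2,3) unfolding avoid_prob sum_x by simp_all
qed

lemma sums_prob_not_all_collected:
  assumes "S \<subseteq> {..<k}"
  shows "(\<lambda>t. prob {\<omega>\<in>space (coupon_space n k). \<not> (\<forall>i\<in>S. has_collected i t \<omega>)})
     sums (\<Sum>B | B \<subseteq> Sigma S missing \<and> B \<noteq> {}. (-1) ^ (card B + 1) / (1 - avoid_prob S B))"
  unfolding prob_not_all_collected[OF assms]
proof (intro sums_sum)
  fix B assume "B \<in> {B. B \<subseteq> Sigma S missing \<and> B \<noteq> {}}"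
  moreover have "finite S"
    using assms finite_subset by blast
  ultimately have "0 \<le> avoid_prob S B" "avoid_prob S B < 1"
    using avoid_prob_bounds by auto
  then show "(\<lambda>t. (-1) ^ (card B + 1) * avoid_prob S B ^ t) sums ((-1) ^ (card B + 1) / (1 - avoid_prob S B))"
    using sums_mult[OF geometric_sums, of "avoid_prob S B" "(-1) ^ (card B + 1)"] by simp
qed

lemma AE_has_collected:
  assumes "i < k"
  shows "AE \<omega> in coupon_space n k. \<exists>t. has_collected i t \<omega>"
proof (rule AE_ex_if_prob_not_tendsto_0)
  show "{\<omega>\<in>space (coupon_space n k). has_collected i t \<omega>} \<in> events" for t
    using pred_has_collected[OF assms] by (simp add: pred_def)
  have "(\<lambda>t. prob {\<omega>\<in>space (coupon_space n k). \<not> (\<forall>i'\<in>{i}. has_collected i' t \<omega>)}) sums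
      (\<Sum>B | B \<subseteq> Sigma {i} missing \<and> B \<noteq> {}. (-1) ^ (card B + 1) / (1 - avoid_prob {i} B))"
    using assms by (intro sums_prob_not_all_collected) auto
  then show "(\<lambda>t. prob {\<omega>\<in>space (coupon_space n k). \<not> has_collected i t \<omega>}) \<longlonglongrightarrow> 0"
    using summable_LIMSEQ_zero[OF sums_summable] by simp
qed

lemma measurable_Max_finish_time:
  assumes "finite S" "S \<subseteq> {..<k}"
  shows "(\<lambda>\<omega>. Max ((\<lambda>i. finish_time i \<omega>) ` S)) \<in> measurable (coupon_space n k) (count_space UNIV)"
proof -
  have count_space_eq_borel: "measurable M (count_space UNIV) = (borel_measurable M :: ('b \<Rightarrow> nat) set)"
    for M :: "'b measure"
    by (rule measurable_cong_sets) (simp_all add: sets_borel_eq_count_space)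
  show ?thesis
    unfolding count_space_eq_borel using assms measurable_finish_time
    by (intro borel_measurable_Max) (auto simp: count_space_eq_borel)
qed

lemma prob_less_Max_finish_time:
  assumes "S \<subseteq> {..<k}" "S \<noteq> {}"
  shows "prob {\<omega>\<in>space (coupon_space n k). t < Max ((\<lambda>i. finish_time i \<omega>) ` S)}
       = prob {\<omega>\<in>space (coupon_space n k). \<not> (\<forall>i\<in>S. has_collected i t \<omega>)}"
proof (rule measure_eq_AE)
  have "finite S"
    using assms(1) finite_subset by blast
  \<comment> \<open>\<open>completion_time\<close> is \<open>0\<close> when a player never completes, which happens with probability 0\<close>
  have "AE \<omega> in coupon_space n k. \<forall>i\<in>S. \<exists>t. has_collected i t \<omega>"
    using assms(1) \<open>finite S\<close> by (intro AE_finite_allI AE_has_collected) auto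
  then show "AE \<omega> in coupon_space n k.
      (\<omega> \<in> {\<omega>\<in>space (coupon_space n k). t < Max ((\<lambda>i. finish_time i \<omega>) ` S)}) =
      (\<omega> \<in> {\<omega>\<in>space (coupon_space n k). \<not> (\<forall>i\<in>S. has_collected i t \<omega>)})"
  proof eventually_elim
    fix \<omega> assume "\<forall>i\<in>S. \<exists>t. has_collected i t \<omega>"
    then have "t < Max ((\<lambda>i. finish_time i \<omega>) ` S) \<longleftrightarrow> \<not> (\<forall>i\<in>S. has_collected i t \<omega>)"
      using \<open>finite S\<close> assms(2) by (simp add: Max_gr_iff less_completion_time_iff)
    then show "(\<omega> \<in> {\<omega>\<in>space (coupon_space n k). t < Max ((\<lambda>i. finish_time i \<omega>) ` S)}) =
      (\<omega> \<in> {\<omega>\<in>space (coupon_space n k). \<not> (\<forall>i\<in>S. has_collected i t \<omega>)})"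
      by simp
  qed
  show "{\<omega>\<in>space (coupon_space n k). t < Max ((\<lambda>i. finish_time i \<omega>) ` S)} \<in> events"
    using measurable_Max_finish_time[OF \<open>finite S\<close> assms(1)] by measurable
  show "{\<omega>\<in>space (coupon_space n k). \<not> (\<forall>i\<in>S. has_collected i t \<omega>)} \<in> events"
    using assms(1) \<open>finite S\<close> pred_has_collected
    by (intro sets.sets_Collect_neg sets.sets_Collect_finite_All) (auto simp: pred_def)
qed

lemma expectation_Max_player_time:
  assumes "S \<subseteq> {..<k}" "S \<noteq> {}"
  shows "integrable (coupon_space n k) (\<lambda>\<omega>. Max ((\<lambda>i. player_time n C i \<omega>) ` S))"
    "expectation (\<lambda>\<omega>. Max ((\<lambda>i. player_time n C i \<omega>) ` S))
       = (\<Sum>B | B \<subseteq> Sigma S missing \<and> B \<noteq> {}. (-1) ^ (card B + 1) / (1 - avoid_prob S B))"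
proof -
  have "finite S"
    using assms(1) finite_subset by blast
  have "Max ((\<lambda>i. player_time n C i \<omega>) ` S) = real (Max ((\<lambda>i. finish_time i \<omega>) ` S))" for \<omega>
    using mono_Max_commute[of real "(\<lambda>i. finish_time i \<omega>) ` S"] \<open>finite S\<close> assms(2)
    by (simp add: player_time_def collect_time_eq_completion_time image_image mono_def)
  moreover note integral_nat_eq_sum_tail_probs[OF measurable_Max_finish_time[OF \<open>finite S\<close> assms(1)]]
  ultimately show "integrable (coupon_space n k) (\<lambda>\<omega>. Max ((\<lambda>i. player_time n C i \<omega>) ` S))"
    "expectation (\<lambda>\<omega>. Max ((\<lambda>i. player_time n C i \<omega>) ` S))
       = (\<Sum>B | B \<subseteq> Sigma S missing \<and> B \<noteq> {}. (-1) ^ (card B + 1) / (1 - avoid_prob S B))"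
    using sums_prob_not_all_collected[OF assms(1)] by (simp_all add: prob_less_Max_finish_time[OF assms])
qed

lemma M_exp_harm_bound:
  assumes "S \<subseteq> {..<k}" "S \<noteq> {}"
  shows "\<bar>M_exp n k C S - real n * harm (card (Sigma S missing))\<bar> \<le> 2 ^ card (Sigma S missing)"
proof -
  let ?U = "Sigma S missing"
  let ?B = "{B. B \<subseteq> ?U \<and> B \<noteq> {}}"
  have "finite S"
    using assms(1) finite_subset by blast
  then have "finite ?U"
    by (simp add: missing_def)
  have "M_exp n k C S - real n * harm (card ?U)
      = (\<Sum>B\<in>?B. (-1) ^ (card B + 1) * (1 / (1 - avoid_prob S B) - real n / real (card B)))"
    unfolding M_exp_def expectation_Max_player_time(2)[OF assms] harm_eq_alternating_sum_subsets[OF \<open>finite ?U\<close>]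
    by (simp add: sum_distrib_left sum_subtractf[symmetric] algebra_simps)
  also have "\<bar>\<dots>\<bar> \<le> (\<Sum>B\<in>?B. 1)"
  proof (rule order.trans[OF sum_abs sum_mono])
    fix B assume "B \<in> ?B"
    then show "\<bar>(-1) ^ (card B + 1) * (1 / (1 - avoid_prob S B) - real n / real (card B))\<bar> \<le> 1"
      using avoid_prob_bounds[OF \<open>finite S\<close>, of B] by (simp add: abs_mult)
  qed
  also have "\<dots> \<le> real (card (Pow ?U))"
    using \<open>finite ?U\<close> card_mono[of "Pow ?U" ?B] by auto
  finally show ?thesis
    using \<open>finite ?U\<close> by (simp add: card_Pow)
qed

lemma m_exp_eq_alternating_sum_M_exp:
  assumes "0 < k"
  shows "m_exp n k C = (\<Sum>S | S \<subseteq> {..<k} \<and> S \<noteq> {}. (-1) ^ (card S + 1) * M_exp n k C S)"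
proof -
  have "m_exp n k C = expectation (\<lambda>\<omega>. \<Sum>S | S \<subseteq> {..<k} \<and> S \<noteq> {}.
      (-1) ^ (card S + 1) * Max ((\<lambda>i. player_time n C i \<omega>) ` S))"
    using assms unfolding m_exp_def by (subst Min_eq_alternating_sum_Max) auto
  also have "\<dots> = (\<Sum>S | S \<subseteq> {..<k} \<and> S \<noteq> {}. (-1) ^ (card S + 1) * M_exp n k C S)"
    unfolding M_exp_def using expectation_Max_player_time(1)
    by (subst Bochner_Integration.integral_sum) auto
  finally show ?thesis .
qed

lemma m_exp_harm_bound:
  assumes "0 < k" "\<And>i. i < k \<Longrightarrow> C i \<subseteq> {..<n} \<and> card (C i) + s i = n"
  shows "\<bar>m_exp n k C - real n * (\<Sum>S | S \<subseteq> {..<k} \<and> S \<noteq> {}. (-1) ^ (card S + 1) * harm (\<Sum>i\<in>S. s i))\<bar>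
         \<le> (\<Sum>S | S \<subseteq> {..<k} \<and> S \<noteq> {}. 2 ^ (\<Sum>i\<in>S. s i))"
proof -
  let ?S = "{S. S \<subseteq> {..<k} \<and> S \<noteq> {}}"
  have card_missing: "card (missing i) = s i" if "i < k" for i
  proof -
    have "C i \<subseteq> {..<n}" "card (C i) + s i = n"
      using assms(2)[OF that] by auto
    then show ?thesis
      using finite_subset[of "C i" "{..<n}"] by (simp add: missing_def card_Diff_subset)
  qed
  have card_Sigma: "card (Sigma S missing) = (\<Sum>i\<in>S. s i)" if "S \<in> ?S" for S
  proof -
    have "card (Sigma S missing) = (\<Sum>i\<in>S. card (missing i))"
      using that finite_subset[of S "{..<k}"] by (intro card_SigmaI) (auto simp: missing_def)
    also have "\<dots> = (\<Sum>i\<in>S. s i)"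
      using that by (intro sum.cong refl card_missing) auto
    finally show ?thesis .
  qed
  have "m_exp n k C - real n * (\<Sum>S\<in>?S. (-1) ^ (card S + 1) * harm (\<Sum>i\<in>S. s i))
      = (\<Sum>S\<in>?S. (-1) ^ (card S + 1) * (M_exp n k C S - real n * harm (card (Sigma S missing))))"
    unfolding m_exp_eq_alternating_sum_M_exp[OF assms(1)] sum_distrib_left sum_subtractf[symmetric]
    by (intro sum.cong refl) (simp add: card_Sigma algebra_simps)
  also have "\<bar>\<dots>\<bar> \<le> (\<Sum>S\<in>?S. 2 ^ (\<Sum>i\<in>S. s i))"
  proof (rule order.trans[OF sum_abs sum_mono])
    fix S assume "S \<in> ?S"
    then show "\<bar>(-1) ^ (card S + 1) * (M_exp n k C S - real n * harm (card (Sigma S missing)))\<bar>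
        \<le> 2 ^ (\<Sum>i\<in>S. s i)"
      using M_exp_harm_bound[of S] card_Sigma[of S] by (simp add: abs_mult)
  qed
  finally show ?thesis .
qed

end

lemma smallo_real_if_eventually_bounded:
  fixes f :: "nat \<Rightarrow> real"
  assumes "eventually (\<lambda>n. \<bar>f n\<bar> \<le> K) at_top"
  shows "f \<in> o(\<lambda>n. real n)"
proof -
  have "f \<in> O(\<lambda>_. 1)"
    using assms by (intro bigoI[of _ K]) (auto elim: eventually_mono)
  also have "(\<lambda>_. 1) \<in> o(\<lambda>n. real n)"
    by real_asymp
  finally show ?thesis .
qed

theorem mainTheorem3:
  fixes k :: nat and s :: "nat \<Rightarrow> nat" and C :: "nat \<Rightarrow> nat \<Rightarrow> nat set"
  assumes "k \<ge> 1"
    and "\<And>n i. i < k \<Longrightarrow> s i \<le> n \<Longrightarrow> C n i \<subseteq> {..<n} \<and> card (C n i) + s i = n"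
  shows "(\<forall>n. n \<ge> 1 \<and> (\<forall>i<k. s i \<le> n) \<longrightarrow>
           m_exp n k (C n) =
           (\<Sum>S | S \<subseteq> {..<k} \<and> S \<noteq> {}. (-1) ^ (card S + 1) * M_exp n k (C n) S)) \<and>
         (\<lambda>n. m_exp n k (C n) -
           real n * (\<Sum>S | S \<subseteq> {..<k} \<and> S \<noteq> {}. (-1) ^ (card S + 1) * harm (\<Sum>i\<in>S. s i)))
         \<in> o(\<lambda>n. real n)"
proof -
  define H :: real where "H = (\<Sum>S | S \<subseteq> {..<k} \<and> S \<noteq> {}. (-1) ^ (card S + 1) * harm (\<Sum>i\<in>S. s i))"
  define K :: real where "K = (\<Sum>S | S \<subseteq> {..<k} \<and> S \<noteq> {}. 2 ^ (\<Sum>i\<in>S. s i))"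
  have "0 < k"
    using assms(1) by simp
  have collectors: "coupon_collectors n" if "1 \<le> n" for n
    using that by unfold_locales simp
  have "eventually (\<lambda>n. 1 \<le> n \<and> (\<forall>i<k. s i \<le> n)) at_top"
    using eventually_ge_at_top[of "Max (insert 1 (s ` {..<k}))"] by eventually_elim (auto simp: Max_le_iff)
  then have "eventually (\<lambda>n. \<bar>m_exp n k (C n) - real n * H\<bar> \<le> K) at_top"
    unfolding H_def K_def
    by eventually_elim (rule coupon_collectors.m_exp_harm_bound[OF collectors \<open>0 < k\<close>]; use assms(2) in auto)
  then show ?thesis
    unfolding H_def using coupon_collectors.m_exp_eq_alternating_sum_M_exp[OF collectors \<open>0 < k\<close>]
    by (auto intro: smallo_real_if_eventually_bounded)
qed

end
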